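(* Let $\Omega\subseteq\mathbb{R}^{m\times m}$, let $d:\Omega^2\to\mathbb{R}$ be a pseudometric, let $n\ge2$ and let $d_F:\Omega^n\to\mathbb{R}$, $d_F(A_1,\dots,A_n)=\min_{B\in\Omega}\sum_{i=1}^n d(A_i,B)$, be the Fermat distance function induced by $d$. Let $\Omega'=\Omega/\!\sim_d$, where $A\sim_d B$ iff $d(A,B)=0$, and write $[A]$ for the equivalence class of $A$. Let $d'_F:\Omega'^n\to\mathbb{R}$ be given by $d'_F([A_1],\dots,[A_n])=d_F(A_1,\dots,A_n)$. Then $d'_F$ is an $n$-metric on $\Omega'$.
   Context: A pseudometric on $\Omega$ is a map $d$ with $d(A,B)\ge0$, $d(A,A)=0$, $d(A,B)=d(B,A)$, $d(A,C)\le d(A,B)+d(B,C)$; $\sim_d$ is then an equivalence relation. For a set $X$, a map $D:X^n\to\mathbb{R}$ is an $n$-metric if for all $x_1,\dots,x_{n+1}\in X$ and all permutations $\sigma$ of $[n]$: $D(x_{1:n})\ge0$; $D(x_{1:n})=0$ iff $x_1=\dots=x_n$; $D(x_{1:n})=D(x_{\sigma(1:n)})$; and $D(x_{1:n})\le\sum_{i=1}^n D(x^i_{1:n,n+1})$, where $x_{1:n}=(x_1,\dots,x_n)$, $x_{\sigma(1:n)}$ has $i$-th entry $x_{\sigma(i)}$, and $x^i_{1:n,n+1}$ is $x_{1:n}$ with $x_i$ replaced by $x_{n+1}$. *)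

theory Defs
  imports "HOL-Analysis.Analysis" "HOL-Combinatorics.Permutations"
begin

definition pseudometric_on :: "(real^'m^'m) set \<Rightarrow> (real^'m^'m \<Rightarrow> real^'m^'m \<Rightarrow> real) \<Rightarrow> bool" where
  "pseudometric_on \<Omega> d \<longleftrightarrow>
     (\<forall>A\<in>\<Omega>. \<forall>B\<in>\<Omega>. d A B \<ge> 0) \<and>
     (\<forall>A\<in>\<Omega>. d A A = 0) \<and>
     (\<forall>A\<in>\<Omega>. \<forall>B\<in>\<Omega>. d A B = d B A) \<and>
     (\<forall>A\<in>\<Omega>. \<forall>B\<in>\<Omega>. \<forall>C\<in>\<Omega>. d A C \<le> d A B + d B C)"

definition pm_rel :: "'a set \<Rightarrow> ('a \<Rightarrow> 'a \<Rightarrow> real) \<Rightarrow> ('a \<times> 'a) set" where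
  "pm_rel \<Omega> d = {(A, B). A \<in> \<Omega> \<and> B \<in> \<Omega> \<and> d A B = 0}"

text \<open>Fermat distance function: d_F(A_1..A_n) = min over B in Omega of sum_i d(A_i,B)
  (written as an infimum, which coincides with the minimum whenever it is attained).
  n-tuples are lists of length n.\<close>
definition fermat_dist :: "'a set \<Rightarrow> ('a \<Rightarrow> 'a \<Rightarrow> real) \<Rightarrow> 'a list \<Rightarrow> real" where
  "fermat_dist \<Omega> d As = Inf {(\<Sum>i<length As. d (As ! i) B) | B. B \<in> \<Omega>}"

definition fermat_quot :: "'a set \<Rightarrow> ('a \<Rightarrow> 'a \<Rightarrow> real) \<Rightarrow> 'a set list \<Rightarrow> real" where
  "fermat_quot \<Omega> d Xs = fermat_dist \<Omega> d (map (\<lambda>X. SOME A. A \<in> X) Xs)"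

definition n_metric :: "'b set \<Rightarrow> nat \<Rightarrow> ('b list \<Rightarrow> real) \<Rightarrow> bool" where
  "n_metric X n D \<longleftrightarrow>
    (\<forall>xs. set xs \<subseteq> X \<and> length xs = n \<longrightarrow>
       D xs \<ge> 0 \<and>
       (D xs = 0 \<longleftrightarrow> (\<forall>i<n. \<forall>j<n. xs ! i = xs ! j)) \<and>
       (\<forall>\<sigma>. \<sigma> permutes {..<n} \<longrightarrow> D xs = D (map (\<lambda>i. xs ! \<sigma> i) [0..<n])) \<and>
       (\<forall>y\<in>X. D xs \<le> (\<Sum>i<n. D (xs[i := y]))))"

end

theory Submission
  imports Defs
begin

(* Since
  d(A\<^sub>i, A\<^sub>j) \<le> d(A\<^sub>i, B) + d(A\<^sub>j, B) \<le> dist_sum A B for every B, d_F vanishes exactly on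
  tuples of pairwise d-equivalent points. For the simplex inequality with a new point y, the
  triangle inequality d(A\<^sub>1, B) \<le> d(A\<^sub>1, y) + d(y, B) at every centre B gives
  d_F(A) \<le> d(A\<^sub>1, y) + d_F(A[1 := y]), and the first bound applied to A[2 := y] gives
  d(A\<^sub>1, y) \<le> d_F(A[2 := y]); the other n - 2 summands are nonnegative. Each step sees
  points only up to d-equivalence, so everything descends to \<Omega>/\<sim>\<^sub>d. *)

locale pseudometric =
  fixes \<Omega> :: "'a set" and d :: "'a \<Rightarrow> 'a \<Rightarrow> real"
  assumes d_nonneg: "A \<in> \<Omega> \<Longrightarrow> B \<in> \<Omega> \<Longrightarrow> 0 \<le> d A B"
    and d_self: "A \<in> \<Omega> \<Longrightarrow> d A A = 0"
    and d_sym: "A \<in> \<Omega> \<Longrightarrow> B \<in> \<Omega> \<Longrightarrow> d A B = d B A"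
    and d_triangle: "A \<in> \<Omega> \<Longrightarrow> B \<in> \<Omega> \<Longrightarrow> C \<in> \<Omega> \<Longrightarrow> d A C \<le> d A B + d B C"

lemma pseudometric_if_pseudometric_on: "pseudometric_on \<Omega> d \<Longrightarrow> pseudometric \<Omega> d"
  unfolding pseudometric_on_def pseudometric_def by blast

definition dist_sum :: "('a \<Rightarrow> 'a \<Rightarrow> real) \<Rightarrow> 'a list \<Rightarrow> 'a \<Rightarrow> real" where
  "dist_sum d As B = (\<Sum>i<length As. d (As ! i) B)"

lemma fermat_dist_eq_Inf_dist_sum: "fermat_dist \<Omega> d As = Inf (dist_sum d As ` \<Omega>)"
  unfolding fermat_dist_def dist_sum_def by (metis Setcompr_eq_image)

lemma dist_sum_update:
  assumes "i < length As"
  shows "dist_sum d (As[i := y]) B + d (As ! i) B = dist_sum d As B + d y B"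
proof -
  let ?rest = "\<lambda>Cs. \<Sum>k\<in>{..<length As} - {i}. d (Cs ! k) B"
  have "dist_sum d As B = d (As ! i) B + ?rest As"
    "dist_sum d (As[i := y]) B = d y B + ?rest (As[i := y])"
    unfolding dist_sum_def using assms by (subst sum.remove[of _ i]; simp)+
  moreover have "?rest (As[i := y]) = ?rest As"
    by (intro sum.cong) auto
  ultimately show ?thesis by simp
qed

lemma dist_sum_permute:
  assumes "\<sigma> permutes {..<length As}"
  shows "dist_sum d (map (\<lambda>i. As ! \<sigma> i) [0..<length As]) B = dist_sum d As B"
proof -
  have "dist_sum d (map (\<lambda>i. As ! \<sigma> i) [0..<length As]) B = (\<Sum>i<length As. d (As ! \<sigma> i) B)"
    unfolding dist_sum_def by (intro sum.cong) auto
  also have "\<dots> = dist_sum d As B"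
    unfolding dist_sum_def using sum.permute[OF assms, of "\<lambda>i. d (As ! i) B"] by (simp add: comp_def)
  finally show ?thesis .
qed

lemma fermat_dist_permute:
  assumes "\<sigma> permutes {..<length As}"
  shows "fermat_dist \<Omega> d (map (\<lambda>i. As ! \<sigma> i) [0..<length As]) = fermat_dist \<Omega> d As"
  unfolding fermat_dist_eq_Inf_dist_sum using dist_sum_permute[OF assms] by simp

context pseudometric
begin

lemma dist_sum_subset_le:
  assumes "set As \<subseteq> \<Omega>" "B \<in> \<Omega>" "K \<subseteq> {..<length As}"
  shows "(\<Sum>k\<in>K. d (As ! k) B) \<le> dist_sum d As B"
  unfolding dist_sum_def
  using assms by (intro sum_mono2) (auto intro: d_nonneg nth_mem)

lemma dist_sum_nonneg:
  assumes "set As \<subseteq> \<Omega>" "B \<in> \<Omega>"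
  shows "0 \<le> dist_sum d As B"
  using dist_sum_subset_le[OF assms, of "{}"] by simp

lemma fermat_dist_le_dist_sum:
  assumes "set As \<subseteq> \<Omega>" "B \<in> \<Omega>"
  shows "fermat_dist \<Omega> d As \<le> dist_sum d As B"
  unfolding fermat_dist_eq_Inf_dist_sum
  using assms dist_sum_nonneg by (intro cInf_lower bdd_belowI2) auto

lemma fermat_dist_greatest:
  assumes "\<Omega> \<noteq> {}" "\<And>B. B \<in> \<Omega> \<Longrightarrow> c \<le> dist_sum d As B"
  shows "c \<le> fermat_dist \<Omega> d As"
  unfolding fermat_dist_eq_Inf_dist_sum using assms by (intro cInf_greatest) auto

lemma fermat_dist_nonneg:
  assumes "set As \<subseteq> \<Omega>" "\<Omega> \<noteq> {}"
  shows "0 \<le> fermat_dist \<Omega> d As"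
  using assms dist_sum_nonneg by (intro fermat_dist_greatest) auto

lemma dist_nth_le_fermat_dist:
  assumes "set As \<subseteq> \<Omega>" "i < length As" "j < length As"
  shows "d (As ! i) (As ! j) \<le> fermat_dist \<Omega> d As"
proof (rule fermat_dist_greatest)
  have Ai: "As ! i \<in> \<Omega>" and Aj: "As ! j \<in> \<Omega>"
    using assms nth_mem by blast+
  then show "\<Omega> \<noteq> {}" by blast
  fix B assume B: "B \<in> \<Omega>"
  show "d (As ! i) (As ! j) \<le> dist_sum d As B"
  proof (cases "i = j")
    case True
    then show ?thesis using Ai B assms(1) by (simp add: d_self dist_sum_nonneg)
  next
    case False
    have "d (As ! i) (As ! j) \<le> d (As ! i) B + d (As ! j) B"
      using d_triangle[OF Ai B Aj] d_sym[OF Aj B] by simp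
    also have "\<dots> = (\<Sum>k\<in>{i, j}. d (As ! k) B)"
      using False by simp
    also have "\<dots> \<le> dist_sum d As B"
      using assms B by (intro dist_sum_subset_le) auto
    finally show ?thesis .
  qed
qed

lemma fermat_dist_eq_0_iff:
  assumes "set As \<subseteq> \<Omega>" "As \<noteq> []"
  shows "fermat_dist \<Omega> d As = 0 \<longleftrightarrow> (\<forall>i<length As. \<forall>j<length As. d (As ! i) (As ! j) = 0)"
proof
  assume "fermat_dist \<Omega> d As = 0"
  then show "\<forall>i<length As. \<forall>j<length As. d (As ! i) (As ! j) = 0"
    using assms(1) dist_nth_le_fermat_dist d_nonneg by (metis nth_mem order_antisym subsetD)
next
  assume zero: "\<forall>i<length As. \<forall>j<length As. d (As ! i) (As ! j) = 0"
  have A0: "As ! 0 \<in> \<Omega>"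
    using assms by auto
  have "dist_sum d As (As ! 0) = 0"
    unfolding dist_sum_def using zero assms(2) by (intro sum.neutral) auto
  then show "fermat_dist \<Omega> d As = 0"
    using fermat_dist_le_dist_sum[OF assms(1) A0] fermat_dist_nonneg[OF assms(1)] A0 by fastforce
qed

lemma fermat_dist_le_update:
  assumes "set As \<subseteq> \<Omega>" "i < length As" "y \<in> \<Omega>"
  shows "fermat_dist \<Omega> d As \<le> d (As ! i) y + fermat_dist \<Omega> d (As[i := y])"
proof -
  have Ai: "As ! i \<in> \<Omega>"
    using assms nth_mem by blast
  have "fermat_dist \<Omega> d As - d (As ! i) y \<le> fermat_dist \<Omega> d (As[i := y])"
  proof (rule fermat_dist_greatest)
    show "\<Omega> \<noteq> {}" using assms(3) by blast
    fix B assume B: "B \<in> \<Omega>"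
    have "fermat_dist \<Omega> d As \<le> dist_sum d As B"
      using fermat_dist_le_dist_sum[OF assms(1) B] .
    also have "\<dots> = dist_sum d (As[i := y]) B + d (As ! i) B - d y B"
      using dist_sum_update[OF assms(2)] by (simp add: algebra_simps)
    also have "\<dots> \<le> dist_sum d (As[i := y]) B + d (As ! i) y"
      using d_triangle[OF Ai assms(3) B] by simp
    finally show "fermat_dist \<Omega> d As - d (As ! i) y \<le> dist_sum d (As[i := y]) B"
      by simp
  qed
  then show ?thesis by simp
qed

lemma fermat_dist_simplex_inequality:
  assumes "set As \<subseteq> \<Omega>" "2 \<le> length As" "y \<in> \<Omega>"
  shows "fermat_dist \<Omega> d As \<le> (\<Sum>i<length As. fermat_dist \<Omega> d (As[i := y]))"
proof -
  have set_update: "set (As[i := y]) \<subseteq> \<Omega>" for i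
    using assms(1,3) set_update_subset_insert by fastforce
  have "fermat_dist \<Omega> d As \<le> d (As ! 0) y + fermat_dist \<Omega> d (As[0 := y])"
    using assms by (intro fermat_dist_le_update) auto
  also have "d (As ! 0) y \<le> fermat_dist \<Omega> d (As[1 := y])"
    using dist_nth_le_fermat_dist[OF set_update[of 1], of 0 1] assms(2) by fastforce
  also have "fermat_dist \<Omega> d (As[1 := y]) + fermat_dist \<Omega> d (As[0 := y])
      = (\<Sum>i\<in>{0, 1}. fermat_dist \<Omega> d (As[i := y]))"
    by simp
  also have "\<dots> \<le> (\<Sum>i<length As. fermat_dist \<Omega> d (As[i := y]))"
    using assms(2,3) fermat_dist_nonneg[OF set_update] by (intro sum_mono2) auto
  finally show ?thesis by simp
qed

lemma fermat_dist_cong: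
  assumes "set As \<subseteq> \<Omega>" "set Bs \<subseteq> \<Omega>" "length As = length Bs"
    and "\<And>i. i < length As \<Longrightarrow> d (As ! i) (Bs ! i) = 0"
  shows "fermat_dist \<Omega> d As = fermat_dist \<Omega> d Bs"
proof -
  have "d (As ! i) B = d (Bs ! i) B" if B: "B \<in> \<Omega>" and i: "i < length As" for B i
  proof -
    have A: "As ! i \<in> \<Omega>" and B': "Bs ! i \<in> \<Omega>"
      using assms(1-3) i nth_mem by (blast, metis subsetD)
    show ?thesis
      using d_triangle[OF A B' B] d_triangle[OF B' A B] d_sym[OF A B'] assms(4)[OF i] by simp
  qed
  then have "dist_sum d As B = dist_sum d Bs B" if "B \<in> \<Omega>" for B
    unfolding dist_sum_def using assms(3) that by (auto intro!: sum.cong)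
  then show ?thesis
    unfolding fermat_dist_eq_Inf_dist_sum by (metis image_cong)
qed

lemma equiv_pm_rel: "equiv \<Omega> (pm_rel \<Omega> d)"
proof (rule equivI)
  show "pm_rel \<Omega> d \<subseteq> \<Omega> \<times> \<Omega>"
    unfolding pm_rel_def by blast
  show "refl_on \<Omega> (pm_rel \<Omega> d)"
    unfolding pm_rel_def by (auto intro: refl_onI simp: d_self)
  show "sym (pm_rel \<Omega> d)"
    unfolding pm_rel_def by (auto intro: symI simp: d_sym)
  show "trans (pm_rel \<Omega> d)"
    unfolding pm_rel_def
    by (auto intro!: transI) (metis add.right_neutral d_nonneg d_triangle order_antisym)
qed

lemma class_representative:
  assumes "X \<in> \<Omega> // pm_rel \<Omega> d"
  shows "(SOME A. A \<in> X) \<in> \<Omega>" and "X = pm_rel \<Omega> d `` {SOME A. A \<in> X}"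
proof -
  have "(SOME A. A \<in> X) \<in> X"
    using assms in_quotient_imp_non_empty[OF equiv_pm_rel] by (simp add: some_in_eq)
  then show "(SOME A. A \<in> X) \<in> \<Omega>" and "X = pm_rel \<Omega> d `` {SOME A. A \<in> X}"
    using assms equiv_pm_rel in_quotient_imp_subset quotient_eq_iff
    by (blast, metis Image_singleton_iff quotientE equiv_class_eq)
qed

lemma representative_in_class:
  assumes "A \<in> \<Omega>"
  shows "(A, SOME B. B \<in> pm_rel \<Omega> d `` {A}) \<in> pm_rel \<Omega> d"
proof -
  have "A \<in> pm_rel \<Omega> d `` {A}"
    using assms d_self unfolding pm_rel_def by simp
  then show ?thesis by (metis Image_singleton_iff someI)
qed

lemma quotient_eq_iff_dist_representatives:
  assumes "X \<in> \<Omega> // pm_rel \<Omega> d" "Y \<in> \<Omega> // pm_rel \<Omega> d"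
  shows "X = Y \<longleftrightarrow> d (SOME A. A \<in> X) (SOME A. A \<in> Y) = 0"
proof -
  let ?R = "pm_rel \<Omega> d"
  have "X = Y \<longleftrightarrow> ?R `` {SOME A. A \<in> X} = ?R `` {SOME A. A \<in> Y}"
    using class_representative(2) assms by metis
  also have "\<dots> \<longleftrightarrow> ((SOME A. A \<in> X), (SOME A. A \<in> Y)) \<in> ?R"
    using class_representative(1) assms by (intro eq_equiv_class_iff[OF equiv_pm_rel])
  also have "\<dots> \<longleftrightarrow> d (SOME A. A \<in> X) (SOME A. A \<in> Y) = 0"
    using class_representative(1) assms unfolding pm_rel_def by blast
  finally show ?thesis .
qed

lemma fermat_quot_classes:
  assumes "set As \<subseteq> \<Omega>"
  shows "fermat_quot \<Omega> d (map (\<lambda>A. pm_rel \<Omega> d `` {A}) As) = fermat_dist \<Omega> d As"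
  unfolding fermat_quot_def map_map comp_def
  using assms representative_in_class unfolding pm_rel_def
  by (intro fermat_dist_cong) (auto simp: subset_iff d_sym)

lemma n_metric_fermat_quot:
  assumes "2 \<le> n"
  shows "n_metric (\<Omega> // pm_rel \<Omega> d) n (fermat_quot \<Omega> d)"
  unfolding n_metric_def
proof (intro allI impI conjI)
  fix Xs assume Xs: "set Xs \<subseteq> \<Omega> // pm_rel \<Omega> d \<and> length Xs = n"
  let ?rep = "\<lambda>X. SOME A. A \<in> X"
  define As where "As = map ?rep Xs"
  have fermat_quot_Xs: "fermat_quot \<Omega> d Xs = fermat_dist \<Omega> d As"
    unfolding fermat_quot_def As_def ..
  have As: "set As \<subseteq> \<Omega>" "length As = n"
    using Xs class_representative(1) unfolding As_def by auto
  then have "As \<noteq> []"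
    using assms by auto
  then show "0 \<le> fermat_quot \<Omega> d Xs"
    using fermat_dist_nonneg[OF As(1)] As(1) unfolding fermat_quot_Xs by force
  have "Xs ! i = Xs ! j \<longleftrightarrow> d (As ! i) (As ! j) = 0" if "i < n" "j < n" for i j
    using quotient_eq_iff_dist_representatives[of "Xs ! i" "Xs ! j"] Xs that
    unfolding As_def by (simp add: subset_iff)
  then show "fermat_quot \<Omega> d Xs = 0 \<longleftrightarrow> (\<forall>i<n. \<forall>j<n. Xs ! i = Xs ! j)"
    unfolding fermat_quot_Xs fermat_dist_eq_0_iff[OF As(1) \<open>As \<noteq> []\<close>] As(2) by simp
  show "fermat_quot \<Omega> d Xs = fermat_quot \<Omega> d (map (\<lambda>i. Xs ! \<sigma> i) [0..<n])"
    if \<sigma>: "\<sigma> permutes {..<n}" for \<sigma>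
  proof -
    have "map ?rep (map (\<lambda>i. Xs ! \<sigma> i) [0..<n]) = map (\<lambda>i. As ! \<sigma> i) [0..<length As]"
      using Xs As(2) permutes_in_image[OF \<sigma>] unfolding As_def by auto
    then have "fermat_quot \<Omega> d (map (\<lambda>i. Xs ! \<sigma> i) [0..<n])
        = fermat_dist \<Omega> d (map (\<lambda>i. As ! \<sigma> i) [0..<length As])"
      unfolding fermat_quot_def by (rule arg_cong)
    then show ?thesis
      unfolding fermat_quot_Xs using fermat_dist_permute[of \<sigma> As] \<sigma> As(2) by simp
  qed
  show "\<forall>Y\<in>\<Omega> // pm_rel \<Omega> d. fermat_quot \<Omega> d Xs \<le> (\<Sum>i<n. fermat_quot \<Omega> d (Xs[i := Y]))"
  proof
    fix Y assume "Y \<in> \<Omega> // pm_rel \<Omega> d"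
    then have "?rep Y \<in> \<Omega>"
      by (rule class_representative(1))
    moreover have "fermat_quot \<Omega> d (Xs[i := Y]) = fermat_dist \<Omega> d (As[i := ?rep Y])" for i
      unfolding fermat_quot_def As_def by (simp add: map_update)
    ultimately show "fermat_quot \<Omega> d Xs \<le> (\<Sum>i<n. fermat_quot \<Omega> d (Xs[i := Y]))"
      unfolding fermat_quot_Xs using fermat_dist_simplex_inequality[OF As(1)] As(2) assms by simp
  qed
qed

end

theorem theorem3:
  fixes \<Omega> :: "(real^'m^'m) set"
    and d :: "real^'m^'m \<Rightarrow> real^'m^'m \<Rightarrow> real"
    and n :: nat
  assumes "pseudometric_on \<Omega> d"
    and "n \<ge> 2"
  shows "(\<forall>As. set As \<subseteq> \<Omega> \<and> length As = n \<longrightarrow>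
            fermat_quot \<Omega> d (map (\<lambda>A. pm_rel \<Omega> d `` {A}) As) = fermat_dist \<Omega> d As)
         \<and> n_metric (\<Omega> // pm_rel \<Omega> d) n (fermat_quot \<Omega> d)"
proof -
  interpret pseudometric \<Omega> d
    using assms(1) by (rule pseudometric_if_pseudometric_on)
  show ?thesis
    using fermat_quot_classes n_metric_fermat_quot[OF assms(2)] by blast
qed

end
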